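(* Let $\mathcal{H}=(V,\vec H,\bm{w})$ be a finite, loopless, strongly connected, weighted directed hypergraph with $|V|\ge2$. For every hyperedge $h\in\vec H$, the function $\alpha\mapsto\kappa_\alpha(h)$ is concave on $[0,1]$.
   Context: A weighted directed hypergraph $(V,\vec H,\bm{w})$ has a finite vertex set $V$, a finite set $\vec H$ of hyperedges, each an ordered pair $h=(A_h,B_h)$ of nonempty subsets of $V$ (input and output), and positive weights $w_h>0$. It is loopless if $A_h\cap B_h=\emptyset$ for all $h$. A directed path from $u$ to $v$ is a sequence of hyperedges $h_1,\dots,h_l$ with $u\in A_{h_1}$, $v\in B_{h_l}$ and $B_{h_j}\cap A_{h_{j+1}}\ne\emptyset$ for $1\le j\le l-1$; the hypergraph is strongly connected if for all distinct $u,v$ there is a directed path from $u$ to $v$. The quasi-distance is $d(u,v)=\inf_\gamma\sum_{h\in\gamma}w_h$ over directed paths from $u$ to $v$ ($u\ne v$), $d(u,u)=0$. For $h=(A_h,B_h)$, $L(h)=\min_{x\in A_h,y\in B_h}d(x,y)$. Neighborhoods: $\Gamma^{in}(v)=\{z:\exists h'\text{ with }v\in B_{h'},z\in A_{h'}\}$, $\Gamma^{out}(v)=\{z:\exists h'\text{ with }v\in A_{h'},z\in B_{h'}\}$. For $h$ with $A_h=\{x_1,\dots,x_n\}$, $B_h=\{y_1,\dots,y_m\}$ and $\alpha\in[0,1]$, define $\mu^\alpha_{A_h}=\sum_{i=1}^n\mu^\alpha_{x_i}$ where $\mu^\alpha_{x_i}(x_i)=\alpha/n$, $\mu^\alpha_{x_i}(z)=(1-\alpha)\sum_{h':x_i\in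 B_{h'},z\in A_{h'}}\frac{1}{n|A_{h'}|}\frac{w_{h'}}{\sum_{h'':x_i\in B_{h''}}w_{h''}}$ for $z\in\Gamma^{in}(x_i)$, and $0$ otherwise; and $\mu^\alpha_{B_h}=\sum_{j=1}^m\mu^\alpha_{y_j}$ where $\mu^\alpha_{y_j}(y_j)=\alpha/m$, $\mu^\alpha_{y_j}(z)=(1-\alpha)\sum_{h':y_j\in A_{h'},z\in B_{h'}}\frac{1}{m|B_{h'}|}\frac{w_{h'}}{\sum_{h'':y_j\in A_{h''}}w_{h''}}$ for $z\in\Gamma^{out}(y_j)$, and $0$ otherwise. These are probability measures on $V$. For probability measures $\mu,\nu$, $W(\mu,\nu)=\inf_\pi\sum_{u,v\in V}\pi(u,v)d(u,v)$ over couplings $\pi$ (with $\sum_v\pi(u,v)=\mu(u)$, $\sum_u\pi(u,v)=\nu(v)$). Finally $\kappa_\alpha(h)=1-\frac{W(\mu^\alpha_{A_h},\mu^\alpha_{B_h})}{L(h)}$. *)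

theory Defs
  imports "HOL-Analysis.Analysis"
begin

text \<open>Hyperedges are pairs (A_h, B_h) of vertex sets; a weighted directed hypergraph is
  given by a vertex set V, a set H of hyperedges and a weight function w.\<close>

type_synonym 'v hedge = "'v set \<times> 'v set"

definition wdhypergraph :: "'v set \<Rightarrow> 'v hedge set \<Rightarrow> ('v hedge \<Rightarrow> real) \<Rightarrow> bool" where
  "wdhypergraph V H w \<longleftrightarrow> finite V \<and> finite H \<and>
     (\<forall>h\<in>H. fst h \<noteq> {} \<and> snd h \<noteq> {} \<and> fst h \<subseteq> V \<and> snd h \<subseteq> V \<and> w h > 0)"

definition loopless :: "'v hedge set \<Rightarrow> bool" where
  "loopless H \<longleftrightarrow> (\<forall>h\<in>H. fst h \<inter> snd h = {})"

definition is_dpath :: "'v hedge set \<Rightarrow> 'v \<Rightarrow> 'v \<Rightarrow> 'v hedge list \<Rightarrow> bool" where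
  "is_dpath H u v hs \<longleftrightarrow> hs \<noteq> [] \<and> set hs \<subseteq> H \<and>
     u \<in> fst (hd hs) \<and> v \<in> snd (last hs) \<and>
     (\<forall>j. j + 1 < length hs \<longrightarrow> snd (hs ! j) \<inter> fst (hs ! (j + 1)) \<noteq> {})"

definition strongly_connected :: "'v set \<Rightarrow> 'v hedge set \<Rightarrow> bool" where
  "strongly_connected V H \<longleftrightarrow>
     (\<forall>u\<in>V. \<forall>v\<in>V. u \<noteq> v \<longrightarrow> (\<exists>hs. is_dpath H u v hs))"

definition qdist :: "'v hedge set \<Rightarrow> ('v hedge \<Rightarrow> real) \<Rightarrow> 'v \<Rightarrow> 'v \<Rightarrow> real" where
  "qdist H w u v = (if u = v then 0
     else Inf {sum_list (map w hs) | hs. is_dpath H u v hs})"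

definition Lh :: "'v hedge set \<Rightarrow> ('v hedge \<Rightarrow> real) \<Rightarrow> 'v hedge \<Rightarrow> real" where
  "Lh H w h = Min {qdist H w x y | x y. x \<in> fst h \<and> y \<in> snd h}"

definition mu_in_vertex :: "'v hedge set \<Rightarrow> ('v hedge \<Rightarrow> real) \<Rightarrow> real \<Rightarrow> nat \<Rightarrow> 'v \<Rightarrow> 'v \<Rightarrow> real" where
  "mu_in_vertex H w \<alpha> n x z =
     (if z = x then \<alpha> / real n
      else (1 - \<alpha>) * (\<Sum>h'\<in>{h'\<in>H. x \<in> snd h' \<and> z \<in> fst h'}.
              (1 / (real n * real (card (fst h')))) *
              (w h' / (\<Sum>h''\<in>{h''\<in>H. x \<in> snd h''}. w h''))))"

definition mu_out_vertex :: "'v hedge set \<Rightarrow> ('v hedge \<Rightarrow> real) \<Rightarrow> real \<Rightarrow> nat \<Rightarrow> 'v \<Rightarrow> 'v \<Rightarrow> real" where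
  "mu_out_vertex H w \<alpha> m y z =
     (if z = y then \<alpha> / real m
      else (1 - \<alpha>) * (\<Sum>h'\<in>{h'\<in>H. y \<in> fst h' \<and> z \<in> snd h'}.
              (1 / (real m * real (card (snd h')))) *
              (w h' / (\<Sum>h''\<in>{h''\<in>H. y \<in> fst h''}. w h''))))"

definition mu_A :: "'v hedge set \<Rightarrow> ('v hedge \<Rightarrow> real) \<Rightarrow> real \<Rightarrow> 'v hedge \<Rightarrow> 'v \<Rightarrow> real" where
  "mu_A H w \<alpha> h z = (\<Sum>x\<in>fst h. mu_in_vertex H w \<alpha> (card (fst h)) x z)"

definition mu_B :: "'v hedge set \<Rightarrow> ('v hedge \<Rightarrow> real) \<Rightarrow> real \<Rightarrow> 'v hedge \<Rightarrow> 'v \<Rightarrow> real" where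
  "mu_B H w \<alpha> h z = (\<Sum>y\<in>snd h. mu_out_vertex H w \<alpha> (card (snd h)) y z)"

definition coupling :: "'v set \<Rightarrow> ('v \<Rightarrow> real) \<Rightarrow> ('v \<Rightarrow> real) \<Rightarrow> ('v \<Rightarrow> 'v \<Rightarrow> real) \<Rightarrow> bool" where
  "coupling V \<mu> \<nu> \<pi> \<longleftrightarrow> (\<forall>u\<in>V. \<forall>v\<in>V. \<pi> u v \<ge> 0) \<and>
     (\<forall>u\<in>V. (\<Sum>v\<in>V. \<pi> u v) = \<mu> u) \<and> (\<forall>v\<in>V. (\<Sum>u\<in>V. \<pi> u v) = \<nu> v)"

definition wasserstein :: "'v set \<Rightarrow> 'v hedge set \<Rightarrow> ('v hedge \<Rightarrow> real) \<Rightarrow> ('v \<Rightarrow> real) \<Rightarrow> ('v \<Rightarrow> real) \<Rightarrow> real" where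
  "wasserstein V H w \<mu> \<nu> =
     Inf {(\<Sum>u\<in>V. \<Sum>v\<in>V. \<pi> u v * qdist H w u v) | \<pi>. coupling V \<mu> \<nu> \<pi>}"

definition kappa :: "'v set \<Rightarrow> 'v hedge set \<Rightarrow> ('v hedge \<Rightarrow> real) \<Rightarrow> real \<Rightarrow> 'v hedge \<Rightarrow> real" where
  "kappa V H w \<alpha> h = 1 - wasserstein V H w (mu_A H w \<alpha> h) (mu_B H w \<alpha> h) / Lh H w h"

end

theory Submission
  imports Defs
begin

text \<open>Both measures \<open>\<mu>\<^sup>\<alpha>\<^sub>A\<close> and \<open>\<mu>\<^sup>\<alpha>\<^sub>B\<close> depend affinely on \<open>\<alpha>\<close>, and the same mixture of
  couplings for \<open>\<alpha>\<^sub>1\<close> and \<open>\<alpha>\<^sub>2\<close> is a coupling for the mixed parameter whose cost is the mixture of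
  the costs. Hence \<open>W(\<mu>\<^sup>\<alpha>\<^sub>A, \<mu>\<^sup>\<alpha>\<^sub>B)\<close> is convex in \<open>\<alpha>\<close>, and dividing by \<open>L(h) \<ge> 0\<close> and subtracting
  from 1 gives a concave function. The hypotheses on the hypergraph make the measures probability
  vectors (so that couplings exist) and the distances nonnegative (so that the infima are finite).\<close>

lemma le_mult_cInf:
  fixes X :: "real set"
  assumes "X \<noteq> {}" "0 \<le> c" "\<And>x. x \<in> X \<Longrightarrow> a \<le> c * x"
  shows "a \<le> c * Inf X"
proof (cases "c = 0")
  case True
  then show ?thesis using assms by auto
next
  case False
  then have "a / c \<le> Inf X"
    using assms by (intro cInf_greatest) (auto simp: divide_le_eq mult.commute)
  then show ?thesis using False assms(2) by (simp add: divide_le_eq mult.commute)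
qed

lemma coupling_mix:
  assumes "coupling V \<mu>1 \<nu>1 \<pi>1" "coupling V \<mu>2 \<nu>2 \<pi>2" "0 \<le> u" "0 \<le> v"
  shows "coupling V (\<lambda>z. u * \<mu>1 z + v * \<mu>2 z) (\<lambda>z. u * \<nu>1 z + v * \<nu>2 z)
           (\<lambda>p q. u * \<pi>1 p q + v * \<pi>2 p q)"
  using assms by (simp add: coupling_def sum.distrib flip: sum_distrib_left)

lemma coupling_product:
  assumes "\<And>z. 0 \<le> \<mu> z" "\<And>z. 0 \<le> \<nu> z" "(\<Sum>z\<in>V. \<mu> z) = 1" "(\<Sum>z\<in>V. \<nu> z) = 1"
  shows "coupling V \<mu> \<nu> (\<lambda>p q. \<mu> p * \<nu> q)"
  using assms by (simp add: coupling_def flip: sum_distrib_left sum_distrib_right)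

lemma wasserstein_mix_le:
  assumes d_nonneg: "\<forall>p\<in>V. \<forall>q\<in>V. 0 \<le> qdist H w p q"
    and "\<exists>\<pi>. coupling V \<mu>1 \<nu>1 \<pi>" "\<exists>\<pi>. coupling V \<mu>2 \<nu>2 \<pi>"
    and u: "0 \<le> u" and v: "0 \<le> v"
  shows "wasserstein V H w (\<lambda>z. u * \<mu>1 z + v * \<mu>2 z) (\<lambda>z. u * \<nu>1 z + v * \<nu>2 z)
           \<le> u * wasserstein V H w \<mu>1 \<nu>1 + v * wasserstein V H w \<mu>2 \<nu>2"
proof -
  define cost where "cost \<pi> = (\<Sum>p\<in>V. \<Sum>q\<in>V. \<pi> p q * qdist H w p q)" for \<pi>
  define C where "C \<mu> \<nu> = {cost \<pi> | \<pi>. coupling V \<mu> \<nu> \<pi>}" for \<mu> \<nu>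
  have W: "wasserstein V H w \<mu> \<nu> = Inf (C \<mu> \<nu>)" for \<mu> \<nu>
    by (simp add: wasserstein_def C_def cost_def)
  have "bdd_below (C \<mu> \<nu>)" for \<mu> \<nu>
    using d_nonneg
    by (intro bdd_belowI[of _ 0]) (auto simp: C_def cost_def coupling_def intro!: sum_nonneg)
  have C_ne: "C \<mu>1 \<nu>1 \<noteq> {}" "C \<mu>2 \<nu>2 \<noteq> {}"
    using assms(2,3) by (auto simp: C_def)
  define W12 where "W12 = wasserstein V H w (\<lambda>z. u * \<mu>1 z + v * \<mu>2 z) (\<lambda>z. u * \<nu>1 z + v * \<nu>2 z)"
  have mixed: "W12 \<le> u * cost \<pi>1 + v * cost \<pi>2"
    if "coupling V \<mu>1 \<nu>1 \<pi>1" "coupling V \<mu>2 \<nu>2 \<pi>2" for \<pi>1 \<pi>2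
  proof -
    have "cost (\<lambda>p q. u * \<pi>1 p q + v * \<pi>2 p q)
            \<in> C (\<lambda>z. u * \<mu>1 z + v * \<mu>2 z) (\<lambda>z. u * \<nu>1 z + v * \<nu>2 z)"
      using coupling_mix[OF that u v] by (auto simp: C_def)
    then have "W12 \<le> cost (\<lambda>p q. u * \<pi>1 p q + v * \<pi>2 p q)"
      unfolding W12_def W by (rule cInf_lower) fact
    also have "\<dots> = u * cost \<pi>1 + v * cost \<pi>2"
      by (simp add: cost_def sum.distrib sum_distrib_left algebra_simps)
    finally show ?thesis .
  qed
  have "W12 - v * cost \<pi>2 \<le> u * Inf (C \<mu>1 \<nu>1)" if "coupling V \<mu>2 \<nu>2 \<pi>2" for \<pi>2
  proof (rule le_mult_cInf[OF C_ne(1) u])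
    fix c assume "c \<in> C \<mu>1 \<nu>1"
    with mixed[OF _ that] show "W12 - v * cost \<pi>2 \<le> u * c"
      by (force simp: C_def)
  qed
  then have "W12 - u * Inf (C \<mu>1 \<nu>1) \<le> v * Inf (C \<mu>2 \<nu>2)"
    by (intro le_mult_cInf[OF C_ne(2) v]) (force simp: C_def)
  then show ?thesis by (simp add: W12_def W)
qed

lemma convex_on_wasserstein_affine_path:
  assumes d_nonneg: "\<forall>p\<in>V. \<forall>q\<in>V. 0 \<le> qdist H w p q"
    and "convex I" and couplings: "\<And>\<alpha>. \<alpha> \<in> I \<Longrightarrow> \<exists>\<pi>. coupling V (\<mu> \<alpha>) (\<nu> \<alpha>) \<pi>"
    and \<mu>_affine: "\<And>u v a b z. u + v = 1 \<Longrightarrow> \<mu> (u * a + v * b) z = u * \<mu> a z + v * \<mu> b z"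
    and \<nu>_affine: "\<And>u v a b z. u + v = 1 \<Longrightarrow> \<nu> (u * a + v * b) z = u * \<nu> a z + v * \<nu> b z"
  shows "convex_on I (\<lambda>\<alpha>. wasserstein V H w (\<mu> \<alpha>) (\<nu> \<alpha>))"
  unfolding convex_on_def
proof (intro conjI ballI allI impI)
  fix a b u v :: real
  assume "a \<in> I" "b \<in> I" "0 \<le> u" "0 \<le> v" "u + v = 1"
  moreover have "\<mu> (u * a + v * b) = (\<lambda>z. u * \<mu> a z + v * \<mu> b z)"
    "\<nu> (u * a + v * b) = (\<lambda>z. u * \<nu> a z + v * \<nu> b z)"
    using \<open>u + v = 1\<close> \<mu>_affine \<nu>_affine by auto
  ultimately show "wasserstein V H w (\<mu> (u *\<^sub>R a + v *\<^sub>R b)) (\<nu> (u *\<^sub>R a + v *\<^sub>R b))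
           \<le> u * wasserstein V H w (\<mu> a) (\<nu> a) + v * wasserstein V H w (\<mu> b) (\<nu> b)"
    using wasserstein_mix_le[OF d_nonneg couplings couplings] by simp
qed fact

lemma is_dpath_edges:
  assumes "is_dpath H u v hs"
  shows "\<exists>h\<in>H. u \<in> fst h" "\<exists>h\<in>H. v \<in> snd h"
proof -
  have "hs \<noteq> []" "set hs \<subseteq> H" "u \<in> fst (hd hs)" "v \<in> snd (last hs)"
    using assms by (simp_all add: is_dpath_def)
  then show "\<exists>h\<in>H. u \<in> fst h" "\<exists>h\<in>H. v \<in> snd h"
    by (meson hd_in_set last_in_set subsetD)+
qed

lemma strongly_connected_in_out_edges:
  assumes "strongly_connected V H" "card V \<ge> 2" "x \<in> V"
  shows "\<exists>h\<in>H. x \<in> snd h" and "\<exists>h\<in>H. x \<in> fst h"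
proof -
  obtain u where "u \<in> V" "u \<noteq> x"
    using assms(2) card_mono[of "{x}" V] by force
  moreover have "\<forall>p\<in>V. \<forall>q\<in>V. p \<noteq> q \<longrightarrow> (\<exists>hs. is_dpath H p q hs)"
    using assms(1) by (simp add: strongly_connected_def)
  ultimately have "\<exists>hs. is_dpath H u x hs" "\<exists>gs. is_dpath H x u gs"
    using assms(3) by auto
  then obtain hs gs where "is_dpath H u x hs" "is_dpath H x u gs"
    by blast
  then show "\<exists>h\<in>H. x \<in> snd h" "\<exists>h\<in>H. x \<in> fst h"
    by (simp_all add: is_dpath_edges)
qed

lemma qdist_nonneg:
  assumes "wdhypergraph V H w" "strongly_connected V H" "u \<in> V" "v \<in> V"
  shows "0 \<le> qdist H w u v"
proof (cases "u = v")
  case True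
  then show ?thesis by (simp add: qdist_def)
next
  case False
  then obtain hs where "is_dpath H u v hs"
    using assms by (auto simp: strongly_connected_def)
  moreover have "0 \<le> sum_list (map w gs)" if "is_dpath H u v gs" for gs
    using that assms(1)
    by (intro sum_list_nonneg) (auto simp: is_dpath_def wdhypergraph_def less_imp_le)
  ultimately have "0 \<le> Inf {sum_list (map w hs) | hs. is_dpath H u v hs}"
    by (intro cInf_greatest) auto
  then show ?thesis using False by (simp add: qdist_def)
qed

lemma Lh_nonneg:
  assumes wd: "wdhypergraph V H w" and sc: "strongly_connected V H" and h: "h \<in> H"
  shows "0 \<le> Lh H w h"
proof -
  have ends: "fst h \<subseteq> V" "snd h \<subseteq> V" "fst h \<times> snd h \<noteq> {}" "finite V"
    using wd h by (auto simp: wdhypergraph_def)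
  then have "finite (fst h \<times> snd h)"
    by (auto intro: finite_subset)
  have "{qdist H w x y | x y. x \<in> fst h \<and> y \<in> snd h} = case_prod (qdist H w) ` (fst h \<times> snd h)"
    by auto
  then show ?thesis
    using ends \<open>finite (fst h \<times> snd h)\<close> qdist_nonneg[OF wd sc]
    by (auto simp: Lh_def Min_ge_iff subset_iff)
qed

lemma mu_in_vertex_mix:
  fixes u v :: real
  assumes "u + v = 1"
  shows "mu_in_vertex H w (u * a + v * b) n x z
           = u * mu_in_vertex H w a n x z + v * mu_in_vertex H w b n x z"
proof -
  have v: "v = 1 - u" using assms by simp
  show ?thesis
    unfolding mu_in_vertex_def v
    by (simp add: algebra_simps flip: add_divide_distrib diff_divide_distrib)
qed

lemma mu_A_mix:
  "u + v = 1 \<Longrightarrow> mu_A H w (u * a + v * b) h z = u * mu_A H w a h z + v * mu_A H w b h z"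
  by (simp add: mu_A_def mu_in_vertex_mix sum.distrib sum_distrib_left)

lemma mu_A_nonneg:
  assumes "wdhypergraph V H w" "0 \<le> \<alpha>" "\<alpha> \<le> 1"
  shows "0 \<le> mu_A H w \<alpha> h z"
  using assms
  by (auto simp: mu_A_def mu_in_vertex_def wdhypergraph_def less_imp_le
      intro!: sum_nonneg mult_nonneg_nonneg divide_nonneg_nonneg)

lemma sum_mu_in_vertex:
  assumes wd: "wdhypergraph V H w" and ll: "loopless H"
    and x: "x \<in> V" and has_in_edge: "\<exists>h\<in>H. x \<in> snd h"
  shows "(\<Sum>z\<in>V. mu_in_vertex H w \<alpha> n x z) = 1 / real n"
proof -
  have fin: "finite V" "finite H" using wd by (auto simp: wdhypergraph_def)
  define Hx where "Hx = {h\<in>H. x \<in> snd h}"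
  define Wx where "Wx = (\<Sum>h\<in>Hx. w h)"
  define p where "p h = w h / (real n * real (card (fst h)) * Wx)" for h
  have "Wx > 0"
    unfolding Wx_def using has_in_edge wd fin
    by (intro sum_pos) (auto simp: Hx_def wdhypergraph_def)
  have tails: "{z \<in> V - {x}. z \<in> fst h} = fst h" "card (fst h) > 0" if "h \<in> Hx" for h
    using that wd ll fin by (auto simp: Hx_def wdhypergraph_def loopless_def card_gt_0_iff
        intro: finite_subset)
  have "(\<Sum>z\<in>V - {x}. \<Sum>h\<in>{h\<in>Hx. z \<in> fst h}. p h)
      = (\<Sum>h\<in>Hx. \<Sum>z\<in>{z\<in>V - {x}. z \<in> fst h}. p h)"
    using fin by (intro sum.swap_restrict) (auto simp: Hx_def)
  also have "\<dots> = (\<Sum>h\<in>Hx. w h / (real n * Wx))"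
  proof (rule sum.cong [OF refl])
    fix h assume "h \<in> Hx"
    with tails[OF this] show "(\<Sum>z\<in>{z\<in>V - {x}. z \<in> fst h}. p h) = w h / (real n * Wx)"
      by (simp add: p_def)
  qed
  also have "\<dots> = 1 / real n"
    using \<open>Wx > 0\<close> by (simp add: Wx_def flip: sum_divide_distrib)
  finally have spread: "(\<Sum>z\<in>V - {x}. \<Sum>h\<in>{h\<in>Hx. z \<in> fst h}. p h) = 1 / real n" .
  have off_diagonal: "mu_in_vertex H w \<alpha> n x z = (1 - \<alpha>) * (\<Sum>h\<in>{h\<in>Hx. z \<in> fst h}. p h)"
    if "z \<noteq> x" for z
  proof -
    have "{h\<in>H. x \<in> snd h \<and> z \<in> fst h} = {h\<in>Hx. z \<in> fst h}" by (auto simp: Hx_def)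
    then show ?thesis
      using that by (simp add: mu_in_vertex_def p_def Wx_def Hx_def)
  qed
  have "(\<Sum>z\<in>V. mu_in_vertex H w \<alpha> n x z)
      = mu_in_vertex H w \<alpha> n x x + (\<Sum>z\<in>V - {x}. mu_in_vertex H w \<alpha> n x z)"
    using fin x by (simp add: sum.remove)
  also have "\<dots> = \<alpha> / real n + (1 - \<alpha>) * (\<Sum>z\<in>V - {x}. \<Sum>h\<in>{h\<in>Hx. z \<in> fst h}. p h)"
    using off_diagonal by (simp add: mu_in_vertex_def sum_distrib_left)
  finally show ?thesis using spread by (simp flip: add_divide_distrib)
qed

lemma sum_mu_A:
  assumes wd: "wdhypergraph V H w" and "loopless H" and h: "h \<in> H"
    and has_in_edge: "\<forall>x\<in>V. \<exists>h'\<in>H. x \<in> snd h'"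
  shows "(\<Sum>z\<in>V. mu_A H w \<alpha> h z) = 1"
proof -
  have tail: "fst h \<subseteq> V" "card (fst h) > 0"
    using wd h by (auto simp: wdhypergraph_def card_gt_0_iff intro: finite_subset)
  have "(\<Sum>z\<in>V. mu_A H w \<alpha> h z) = (\<Sum>x\<in>fst h. \<Sum>z\<in>V. mu_in_vertex H w \<alpha> (card (fst h)) x z)"
    unfolding mu_A_def by (rule sum.swap)
  also have "\<dots> = (\<Sum>x\<in>fst h. 1 / real (card (fst h)))"
  proof (rule sum.cong [OF refl])
    fix x assume "x \<in> fst h"
    then show "(\<Sum>z\<in>V. mu_in_vertex H w \<alpha> (card (fst h)) x z) = 1 / real (card (fst h))"
      using tail(1) has_in_edge by (intro sum_mu_in_vertex[OF wd \<open>loopless H\<close>]) auto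
  qed
  also have "\<dots> = 1"
    using tail(2) by simp
  finally show ?thesis .
qed

lemma mu_out_vertex_eq_mu_in_vertex_swap:
  "mu_out_vertex H w = mu_in_vertex (prod.swap ` H) (w \<circ> prod.swap)"
proof (intro ext)
  fix \<alpha> m y z
  have reindex: "(\<Sum>h\<in>prod.swap ` {h\<in>H. P h}. f h) = (\<Sum>h\<in>{h\<in>H. P h}. f (prod.swap h))"
    for P and f :: "'a hedge \<Rightarrow> real"
    by (simp add: sum.reindex)
  have "{h'\<in>prod.swap ` H. y \<in> snd h' \<and> z \<in> fst h'} = prod.swap ` {h'\<in>H. y \<in> fst h' \<and> z \<in> snd h'}"
       "{h'\<in>prod.swap ` H. y \<in> snd h'} = prod.swap ` {h'\<in>H. y \<in> fst h'}"
    by auto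
  then show "mu_out_vertex H w \<alpha> m y z = mu_in_vertex (prod.swap ` H) (w \<circ> prod.swap) \<alpha> m y z"
    unfolding mu_out_vertex_def mu_in_vertex_def by (simp only: reindex) simp
qed

lemma mu_B_eq_mu_A_swap:
  "mu_B H w \<alpha> h = mu_A (prod.swap ` H) (w \<circ> prod.swap) \<alpha> (prod.swap h)"
  by (simp add: fun_eq_iff mu_A_def mu_B_def mu_out_vertex_eq_mu_in_vertex_swap)

lemma wdhypergraph_swap: "wdhypergraph V H w \<Longrightarrow> wdhypergraph V (prod.swap ` H) (w \<circ> prod.swap)"
  by (auto simp: wdhypergraph_def)

lemma loopless_swap: "loopless H \<Longrightarrow> loopless (prod.swap ` H)"
  by (auto simp: loopless_def)

lemma ex_coupling_mu_A_mu_B: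
  assumes wd: "wdhypergraph V H w" and ll: "loopless H" and sc: "strongly_connected V H"
    and "card V \<ge> 2" and "h \<in> H" and "\<alpha> \<in> {0..1}"
  shows "\<exists>\<pi>. coupling V (mu_A H w \<alpha> h) (mu_B H w \<alpha> h) \<pi>"
proof -
  note edges = strongly_connected_in_out_edges[OF sc \<open>card V \<ge> 2\<close>]
  have "0 \<le> mu_A H w \<alpha> h z" "0 \<le> mu_B H w \<alpha> h z" for z
    using \<open>\<alpha> \<in> {0..1}\<close> mu_A_nonneg[OF wd] mu_A_nonneg[OF wdhypergraph_swap[OF wd]]
    by (auto simp: mu_B_eq_mu_A_swap)
  moreover have "(\<Sum>z\<in>V. mu_A H w \<alpha> h z) = 1"
    using sum_mu_A[OF wd ll \<open>h \<in> H\<close>] edges(1) by blast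
  moreover have "(\<Sum>z\<in>V. mu_B H w \<alpha> h z) = 1"
    using sum_mu_A[OF wdhypergraph_swap[OF wd] loopless_swap[OF ll]] edges(2) \<open>h \<in> H\<close>
    by (auto simp: mu_B_eq_mu_A_swap)
  ultimately show ?thesis
    using coupling_product by blast
qed

theorem mainTheorem5:
  fixes V :: "'v set" and H :: "'v hedge set" and w :: "'v hedge \<Rightarrow> real" and h :: "'v hedge"
  assumes "wdhypergraph V H w"
    and "loopless H"
    and "strongly_connected V H"
    and "card V \<ge> 2"
    and "h \<in> H"
  shows "concave_on {0..1} (\<lambda>\<alpha>. kappa V H w \<alpha> h)"
proof -
  note wd = assms(1) and sc = assms(3)
  have "convex_on {0..1} (\<lambda>\<alpha>. wasserstein V H w (mu_A H w \<alpha> h) (mu_B H w \<alpha> h))"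
    using qdist_nonneg[OF wd sc] ex_coupling_mu_A_mu_B[OF assms]
    by (intro convex_on_wasserstein_affine_path) (auto simp: mu_A_mix mu_B_eq_mu_A_swap)
  then have "convex_on {0..1}
      (\<lambda>\<alpha>. wasserstein V H w (mu_A H w \<alpha> h) (mu_B H w \<alpha> h) / Lh H w h)"
    using Lh_nonneg[OF wd sc \<open>h \<in> H\<close>] by (rule convex_on_cdiv[rotated])
  then show ?thesis
    unfolding kappa_def by (intro concave_on_diff) (auto simp: concave_on_const)
qed

end
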